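(* Let $d$ be an integer and let $u$ be a real or complex measurable function on $(0,1)$ with $\int_0^1\rho|u(\rho)|^2\mathrm{d}\rho<\infty$. Then for $d\le0$, $$\int_0^1\left|\int_0^r\rho^{1-d}u(\rho)\,\mathrm{d}\rho\right|^2r^{2d-1}\,\mathrm{d}r\le\frac{1}{j_{-d}^2}\int_0^1\rho|u(\rho)|^2\,\mathrm{d}\rho,$$ and for $d\ge1$, $$\int_0^1\left|\int_r^1\rho^{1-d}u(\rho)\,\mathrm{d}\rho\right|^2r^{2d-1}\,\mathrm{d}r\le\frac{1}{j_{d-1}^2}\int_0^1\rho|u(\rho)|^2\,\mathrm{d}\rho,$$ where $j_k$ denotes the smallest positive zero of the Bessel function $J_k$.
   Context: The Bessel function of order $k$ is $J_k(x)=\sum_{n\ge0}\frac{(-1)^n}{\Gamma(n+k+1)n!}(x/2)^{2n+k}$. *)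

theory Defs
  imports "HOL-Analysis.Analysis"
begin

definition bessel_J :: "nat \<Rightarrow> real \<Rightarrow> real" where
  "bessel_J k x = (\<Sum>n. (-1) ^ n / (Gamma (real (n + k) + 1) * fact n) * (x / 2) ^ (2 * n + k))"

definition bessel_zero :: "nat \<Rightarrow> real" where
  "bessel_zero k = (LEAST x. x > 0 \<and> bessel_J k x = 0)"

end

(* The normalized Bessel function G_k x = J_k x / (x/2)^k = F_k (x^2/4) is an entire power series
   with G_k' = -(x/2) G_(k+1) and (x^(2k+2) G_(k+1))' = 2 x^(2k+1) G_k.  A Picone-type argument shows
   that G_k has a first positive zero j = j_k, so that G_k > 0 on [0, j) and G_(k+1) > 0 on [0, j].
   Both inequalities then follow from Schur's test (weighted Cauchy-Schwarz and Tonelli) for the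
   Hardy-type operators, with test functions built from G_k (j r) and G_(k+1) (j r): by the two
   derivative identities every Schur integral is an exact antiderivative, and the boundary value
   G_k j = 0 produces the constant 1/j^2. *)

theory Submission
  imports Defs
begin

definition bessel_coeff :: "nat \<Rightarrow> nat \<Rightarrow> real" where
  "bessel_coeff k n = (-1) ^ n / (fact (n + k) * fact n)"

definition bessel_F :: "nat \<Rightarrow> real \<Rightarrow> real" where
  "bessel_F k y = (\<Sum>n. bessel_coeff k n * y ^ n)"

lemma summable_bessel_coeff: "summable (\<lambda>n. bessel_coeff k n * y ^ n)"
proof (rule summable_comparison_test[OF _ summable_exp[of "\<bar>y\<bar>"]])
  have "norm (bessel_coeff k n * y ^ n) \<le> inverse (fact n) * \<bar>y\<bar> ^ n" for n
  proof -
    have "fact n \<le> (fact (n + k) * fact n :: real)"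
      using fact_ge_1[of "n + k", where 'a=real] by simp
    then have "\<bar>y\<bar> ^ n / (fact (n + k) * fact n) \<le> \<bar>y\<bar> ^ n / fact n"
      by (intro divide_left_mono) auto
    then show ?thesis
      by (simp add: bessel_coeff_def abs_mult power_abs divide_inverse mult.commute)
  qed
  then show "\<exists>N. \<forall>n\<ge>N. norm (bessel_coeff k n * y ^ n) \<le> inverse (fact n) * \<bar>y\<bar> ^ n"
    by blast
qed

lemma diffs_bessel_coeff: "diffs (bessel_coeff k) = (\<lambda>n. - bessel_coeff (Suc k) n)"
  by (simp add: fun_eq_iff diffs_def bessel_coeff_def field_simps del: of_nat_Suc)

lemma has_real_derivative_bessel_F: "(bessel_F k has_real_derivative - bessel_F (Suc k) y) (at y)"
proof -
  have "(bessel_F k has_real_derivative (\<Sum>n. diffs (bessel_coeff k) n * y ^ n)) (at y)"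
    unfolding bessel_F_def[abs_def]
    by (rule termdiffs_strong_converges_everywhere) (rule summable_bessel_coeff)
  also have "(\<Sum>n. diffs (bessel_coeff k) n * y ^ n) = - bessel_F (Suc k) y"
    using summable_bessel_coeff
    by (simp add: diffs_bessel_coeff bessel_F_def suminf_minus[symmetric])
  finally show ?thesis .
qed

lemma bessel_F_0: "bessel_F k 0 = 1 / fact k"
  using powser_zero[of "bessel_coeff k"] by (simp add: bessel_F_def bessel_coeff_def)

lemma bessel_coeff_recurrence:
  "bessel_coeff k (Suc n) = real (Suc k) * bessel_coeff (Suc k) (Suc n) - bessel_coeff (Suc (Suc k)) n"
  by (simp add: bessel_coeff_def field_simps del: of_nat_Suc) (simp add: algebra_simps)

lemma bessel_F_recurrence:
  "bessel_F k y = real (Suc k) * bessel_F (Suc k) y - y * bessel_F (Suc (Suc k)) y"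
proof -
  define g where "g n = (if n = 0 then 0 else bessel_coeff (Suc (Suc k)) (n - 1) * y ^ n)" for n
  have "(\<lambda>n. g (Suc n)) sums (y * bessel_F (Suc (Suc k)) y)"
    using sums_mult[OF summable_sums[OF summable_bessel_coeff], of y "Suc (Suc k)" y]
    by (simp add: g_def bessel_F_def algebra_simps)
  then have "g sums (y * bessel_F (Suc (Suc k)) y)"
    by (subst (asm) sums_Suc_iff) (simp add: g_def)
  with sums_mult[OF summable_sums[OF summable_bessel_coeff], of "real (Suc k)" "Suc k" y]
  have "(\<lambda>n. real (Suc k) * (bessel_coeff (Suc k) n * y ^ n) - g n)
          sums (real (Suc k) * bessel_F (Suc k) y - y * bessel_F (Suc (Suc k)) y)"
    unfolding bessel_F_def by (rule sums_diff)
  moreover have "real (Suc k) * (bessel_coeff (Suc k) n * y ^ n) - g n = bessel_coeff k n * y ^ n" for n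
  proof (cases n)
    case 0
    then show ?thesis by (simp add: g_def bessel_coeff_def)
  next
    case (Suc m)
    then show ?thesis by (simp add: g_def bessel_coeff_recurrence[of k m] algebra_simps)
  qed
  ultimately show ?thesis
    unfolding bessel_F_def by (simp add: sums_iff)
qed

definition bessel_G :: "nat \<Rightarrow> real \<Rightarrow> real" where
  "bessel_G k x = bessel_F k (x\<^sup>2 / 4)"

lemma bessel_J_eq_bessel_G: "bessel_J k x = (x / 2) ^ k * bessel_G k x"
proof -
  have "bessel_J k x = (\<Sum>n. (x / 2) ^ k * (bessel_coeff k n * (x\<^sup>2 / 4) ^ n))"
    unfolding bessel_J_def
  proof (rule suminf_cong)
    fix n
    have "Gamma (real (n + k) + 1) = fact (n + k)"
      using Gamma_fact[of "n + k", where 'a=real] by (simp add: add.commute)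
    moreover have "(x / 2) ^ (2 * n + k) = (x / 2) ^ k * (x\<^sup>2 / 4) ^ n"
      unfolding power_add power_mult by (simp add: power_divide mult.commute)
    ultimately show "(-1) ^ n / (Gamma (real (n + k) + 1) * fact n) * (x / 2) ^ (2 * n + k) =
        (x / 2) ^ k * (bessel_coeff k n * (x\<^sup>2 / 4) ^ n)"
      by (simp add: bessel_coeff_def)
  qed
  also have "\<dots> = (x / 2) ^ k * bessel_G k x"
    unfolding bessel_G_def bessel_F_def by (rule suminf_mult[OF summable_bessel_coeff])
  finally show ?thesis .
qed

lemma has_real_derivative_bessel_G [derivative_intros]:
  assumes "(f has_real_derivative f') (at x within s)"
  shows "((\<lambda>x. bessel_G k (f x)) has_real_derivative - (f x / 2) * bessel_G (Suc k) (f x) * f')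
           (at x within s)"
proof -
  have "((\<lambda>x. bessel_F k ((f x)\<^sup>2 / 4)) has_real_derivative
          - bessel_F (Suc k) ((f x)\<^sup>2 / 4) * (2 * f x * f' / 4)) (at x within s)"
    by (rule DERIV_chain2[OF has_real_derivative_bessel_F]) (auto intro!: derivative_eq_intros assms)
  then show ?thesis
    unfolding bessel_G_def by (simp add: field_simps)
qed

lemma bessel_G_recurrence:
  "bessel_G k x = real (Suc k) * bessel_G (Suc k) x - x\<^sup>2 / 4 * bessel_G (Suc (Suc k)) x"
  unfolding bessel_G_def by (rule bessel_F_recurrence)

lemma bessel_G_0_pos: "0 < bessel_G k 0"
  by (simp add: bessel_G_def bessel_F_0)

lemma continuous_on_bessel_G: "continuous_on A (bessel_G k)"
  using has_real_derivative_bessel_G[OF DERIV_ident]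
  by (intro continuous_at_imp_continuous_on ballI DERIV_isCont) blast

lemma borel_measurable_bessel_G [measurable]:
  "f \<in> borel_measurable M \<Longrightarrow> (\<lambda>x. bessel_G k (f x)) \<in> borel_measurable M"
  using borel_measurable_continuous_onI[OF continuous_on_bessel_G] measurable_compose by blast

lemma has_real_derivative_pow_bessel_G:
  "((\<lambda>r. r ^ (2 * k + 2) * bessel_G (Suc k) (j * r)) has_real_derivative
      2 * r ^ (2 * k + 1) * bessel_G k (j * r)) (at r within s)"
proof -
  have "((\<lambda>r. r ^ (2 * k + 2) * bessel_G (Suc k) (j * r)) has_real_derivative
      real (2 * k + 2) * r ^ (2 * k + 1) * bessel_G (Suc k) (j * r)
      + r ^ (2 * k + 2) * (- (j * r / 2) * bessel_G (Suc (Suc k)) (j * r) * j)) (at r within s)"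
    by (rule derivative_eq_intros refl | simp)+
  also have "real (2 * k + 2) * r ^ (2 * k + 1) * bessel_G (Suc k) (j * r)
      + r ^ (2 * k + 2) * (- (j * r / 2) * bessel_G (Suc (Suc k)) (j * r) * j)
      = 2 * r ^ (2 * k + 1) * bessel_G k (j * r)"
    by (simp add: bessel_G_recurrence[of k "j * r"] power2_eq_square algebra_simps)
  finally show ?thesis .
qed

lemma negative_test_energy:
  obtains P :: "real \<Rightarrow> real" where "P 0 = 0" "P (2 * real k + 4) < 0"
    "\<And>x. (P has_real_derivative x ^ (2 * k + 1) * (1 - (2 * real k + 4 - x)\<^sup>2)) (at x)"
proof -
  define K :: real where "K = real k"
  have "0 \<le> K"
    by (simp add: K_def)
  define R where "R = 2 * K + 4"
  define B where "B x = (1 - R\<^sup>2) / (2 * K + 2) + 2 * R * x / (2 * K + 3) - x\<^sup>2 / (2 * K + 4)"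
    for x
  define P where "P x = x ^ (2 * k + 2) * B x" for x
  have dP: "(P has_real_derivative x ^ (2 * k + 1) * (1 - (R - x)\<^sup>2)) (at x)" for x
  proof -
    have "((\<lambda>x. x ^ (2 * k + 2)) has_real_derivative (2 * K + 2) * x ^ (2 * k + 1)) (at x)"
      using DERIV_pow[of "2 * k + 2" x UNIV] by (simp add: K_def ac_simps)
    moreover have "(B has_real_derivative 2 * R / (2 * K + 3) - 2 * x / (2 * K + 4)) (at x)"
      unfolding B_def[abs_def] using \<open>0 \<le> K\<close> by (auto intro!: derivative_eq_intros)
    ultimately have "(P has_real_derivative (2 * K + 2) * x ^ (2 * k + 1) * B x
        + (2 * R / (2 * K + 3) - 2 * x / (2 * K + 4)) * x ^ (2 * k + 2)) (at x)"
      unfolding P_def[abs_def] by (rule DERIV_mult)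
    also have "x ^ (2 * k + 2) = x ^ (2 * k + 1) * x"
      by simp
    also have "(2 * K + 2) * x ^ (2 * k + 1) * B x
        + (2 * R / (2 * K + 3) - 2 * x / (2 * K + 4)) * (x ^ (2 * k + 1) * x)
        = x ^ (2 * k + 1) * ((2 * K + 2) * B x + (2 * R / (2 * K + 3) - 2 * x / (2 * K + 4)) * x)"
      by (simp only: algebra_simps)
    also have "(2 * K + 2) * B x + (2 * R / (2 * K + 3) - 2 * x / (2 * K + 4)) * x = 1 - (R - x)\<^sup>2"
      unfolding B_def using \<open>0 \<le> K\<close>
      by (simp add: divide_simps power2_eq_square) (simp add: algebra_simps)
    finally show ?thesis .
  qed
  have "B R = - (2 * K + 5) / ((2 * K + 2) * (2 * K + 3))"
    using \<open>0 \<le> K\<close> unfolding B_def R_def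
    by (simp add: divide_simps power2_eq_square) (simp add: algebra_simps)
  then have "P R < 0"
    using \<open>0 \<le> K\<close> by (simp add: P_def R_def mult_pos_neg divide_neg_pos)
  moreover have "P 0 = 0"
    by (simp add: P_def)
  ultimately show ?thesis
    using that dP by (simp add: R_def K_def)
qed

lemma has_real_derivative_Picone_bessel_G:
  assumes "bessel_G k x \<noteq> 0"
  shows "((\<lambda>x. x ^ (2 * k + 2) * bessel_G (Suc k) x / (2 * bessel_G k x) * (R - x)\<^sup>2)
    has_real_derivative x ^ (2 * k + 1) *
      ((1 - x / 2 * (bessel_G (Suc k) x / bessel_G k x) * (R - x))\<^sup>2 - (1 - (R - x)\<^sup>2))) (at x)"
proof -
  define S where "S x = x ^ (2 * k + 2) * bessel_G (Suc k) x" for x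
  have dS: "(S has_real_derivative 2 * x ^ (2 * k + 1) * bessel_G k x) (at x)"
    using has_real_derivative_pow_bessel_G[of k 1] by (simp add: S_def[abs_def])
  have dG: "(bessel_G k has_real_derivative - (x / 2) * bessel_G (Suc k) x) (at x)"
    using has_real_derivative_bessel_G[OF DERIV_ident] by simp
  have "((\<lambda>x. S x / (2 * bessel_G k x) * (R - x)\<^sup>2) has_real_derivative x ^ (2 * k + 1) *
      ((1 - x / 2 * (bessel_G (Suc k) x / bessel_G k x) * (R - x))\<^sup>2 - (1 - (R - x)\<^sup>2))) (at x)"
    by (rule derivative_eq_intros dS dG refl | simp add: assms)+
      (simp add: S_def assms field_simps power2_eq_square)
  then show ?thesis
    by (simp add: S_def)
qed

text \<open>Picone's argument with the test function R - x: if G_k stayed positive on [0, R], the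
  function Q below would be nondecreasing there, yet Q 0 = 0 > P R = Q R.\<close>

lemma bessel_G_nonpos_somewhere: "\<exists>x\<ge>0. bessel_G k x \<le> 0"
proof (rule ccontr)
  assume "\<not> ?thesis"
  then have pos: "0 < bessel_G k x" if "0 \<le> x" for x
    using that by force
  define R where "R = 2 * real k + 4"
  obtain P where P: "P 0 = 0" "P R < 0"
    "\<And>x. (P has_real_derivative x ^ (2 * k + 1) * (1 - (R - x)\<^sup>2)) (at x)"
    using negative_test_energy[where k = k] unfolding R_def by blast
  define Q where "Q x = P x + x ^ (2 * k + 2) * bessel_G (Suc k) x / (2 * bessel_G k x) * (R - x)\<^sup>2"
    for x
  have "Q 0 \<le> Q R"
  proof (rule DERIV_nonneg_imp_nondecreasing[of 0 R Q])
    fix x :: real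
    assume "0 \<le> x"
    then have "bessel_G k x \<noteq> 0"
      using pos by force
    from DERIV_add[OF P(3) has_real_derivative_Picone_bessel_G[OF this, where R = R]]
    have "(Q has_real_derivative
        x ^ (2 * k + 1) * (1 - x / 2 * (bessel_G (Suc k) x / bessel_G k x) * (R - x))\<^sup>2) (at x)"
      unfolding Q_def[abs_def] by (simp add: right_diff_distrib)
    with \<open>0 \<le> x\<close> show "\<exists>y. (Q has_real_derivative y) (at x) \<and> 0 \<le> y"
      by (meson mult_nonneg_nonneg zero_le_power zero_le_power2)
  qed (simp add: R_def)
  with P show False
    by (simp add: Q_def)
qed

lemma bessel_G_first_zero:
  "\<exists>z>0. bessel_G k z = 0 \<and> (\<forall>x. 0 \<le> x \<longrightarrow> x < z \<longrightarrow> 0 < bessel_G k x)"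
proof -
  define Z where "Z = {x. 0 \<le> x \<and> bessel_G k x = 0}"
  have zero_below: "\<exists>z\<in>Z. z \<le> x" if "0 \<le> x" "bessel_G k x \<le> 0" for x
    using IVT2'[of "bessel_G k" x 0 0] that bessel_G_0_pos[of k] continuous_on_bessel_G
    by (fastforce simp: Z_def)
  then have "Z \<noteq> {}"
    using bessel_G_nonpos_somewhere by blast
  moreover have "bdd_below Z"
    unfolding Z_def by (auto intro: bdd_belowI[of _ 0])
  moreover have "closed Z"
    unfolding Z_def by (intro closed_Collect_conj closed_Collect_le closed_Collect_eq
        continuous_intros continuous_on_bessel_G)
  ultimately have "Inf Z \<in> Z"
    by (rule closed_contains_Inf)
  moreover have "Inf Z \<noteq> 0"
    using \<open>Inf Z \<in> Z\<close> bessel_G_0_pos[of k] by (auto simp: Z_def)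
  moreover have "0 < bessel_G k x" if "0 \<le> x" "x < Inf Z" for x
    using zero_below[of x] that cInf_lower[OF _ \<open>bdd_below Z\<close>] by force
  ultimately show ?thesis
    by (intro exI[of _ "Inf Z"]) (auto simp: Z_def)
qed

lemma
  shows bessel_zero_pos: "0 < bessel_zero k"
    and bessel_G_bessel_zero: "bessel_G k (bessel_zero k) = 0"
    and bessel_G_pos_below_bessel_zero: "0 \<le> x \<Longrightarrow> x < bessel_zero k \<Longrightarrow> 0 < bessel_G k x"
proof -
  obtain z where z: "0 < z" "bessel_G k z = 0" "\<And>x. 0 \<le> x \<Longrightarrow> x < z \<Longrightarrow> 0 < bessel_G k x"
    using bessel_G_first_zero by blast
  have "bessel_zero k = z"
    unfolding bessel_zero_def
  proof (rule Least_equality)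
    show "0 < z \<and> bessel_J k z = 0"
      using z by (simp add: bessel_J_eq_bessel_G)
    show "z \<le> y" if "0 < y \<and> bessel_J k y = 0" for y
      using that z(3)[of y] by (force simp: bessel_J_eq_bessel_G)
  qed
  with z show "0 < bessel_zero k" "bessel_G k (bessel_zero k) = 0"
    "0 \<le> x \<Longrightarrow> x < bessel_zero k \<Longrightarrow> 0 < bessel_G k x"
    by auto
qed

lemma bessel_G_Suc_pos:
  assumes "0 \<le> x" "x \<le> bessel_zero k"
  shows "0 < bessel_G (Suc k) x"
proof (cases "x = 0")
  case True
  then show ?thesis by (simp add: bessel_G_0_pos)
next
  case False
  then have "0 < x" using assms by simp
  have "0 ^ (2 * k + 2) * bessel_G (Suc k) 0 < x ^ (2 * k + 2) * bessel_G (Suc k) x"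
  proof (rule DERIV_pos_imp_increasing_open[OF \<open>0 < x\<close>])
    fix r :: real
    assume "0 < r" "r < x"
    then have "0 < 2 * r ^ (2 * k + 1) * bessel_G k r"
      using assms bessel_G_pos_below_bessel_zero[of r k] by simp
    with has_real_derivative_pow_bessel_G[of k 1 r UNIV]
    show "\<exists>y. ((\<lambda>r. r ^ (2 * k + 2) * bessel_G (Suc k) r) has_real_derivative y) (at r) \<and> 0 < y"
      by auto
  next
    show "continuous_on {0..x} (\<lambda>r. r ^ (2 * k + 2) * bessel_G (Suc k) r)"
      by (intro continuous_intros continuous_on_bessel_G)
  qed
  then have "0 < x ^ (2 * k + 2) * bessel_G (Suc k) x"
    by simp
  with \<open>0 < x\<close> show ?thesis
    by (metis zero_less_mult_pos zero_less_power)
qed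

lemma norm_set_integral_weighted_Cauchy_Schwarz:
  fixes u :: "'a \<Rightarrow> complex" and \<kappa> h :: "'a \<Rightarrow> real"
  assumes "set_borel_measurable M S u"
    and [measurable]: "\<kappa> \<in> borel_measurable M" "h \<in> borel_measurable M" "S \<in> sets M"
    and pos: "\<And>x. x \<in> S \<Longrightarrow> 0 < \<kappa> x \<and> 0 < h x"
  shows "ennreal ((cmod (set_lebesgue_integral M S (\<lambda>x. complex_of_real (\<kappa> x) * u x)))\<^sup>2)
    \<le> (\<integral>\<^sup>+x\<in>S. ennreal (\<kappa> x * h x) \<partial>M) * (\<integral>\<^sup>+x\<in>S. ennreal (\<kappa> x * (cmod (u x))\<^sup>2 / h x) \<partial>M)"
proof -
  have [measurable]: "(\<lambda>x. indicator S x *\<^sub>R u x) \<in> borel_measurable M"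
    using assms(1) by (simp add: set_borel_measurable_def)
  define f where "f x = ennreal (sqrt (\<kappa> x * h x)) * indicator S x" for x
  define g where "g x = ennreal (sqrt (\<kappa> x * (cmod (indicator S x *\<^sub>R u x))\<^sup>2 / h x))" for x
  have [measurable]: "f \<in> borel_measurable M" "g \<in> borel_measurable M"
    unfolding f_def[abs_def] g_def[abs_def] by measurable
  have "ennreal (cmod (set_lebesgue_integral M S (\<lambda>x. complex_of_real (\<kappa> x) * u x)))
      \<le> (\<integral>\<^sup>+x. norm (indicator S x *\<^sub>R (complex_of_real (\<kappa> x) * u x)) \<partial>M)"
    using integral_norm_bound_ennreal[of M "\<lambda>x. indicator S x *\<^sub>R (complex_of_real (\<kappa> x) * u x)"]
    unfolding set_lebesgue_integral_def
    by (cases "integrable M (\<lambda>x. indicator S x *\<^sub>R (complex_of_real (\<kappa> x) * u x))")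
      (simp_all add: not_integrable_integral_eq)
  also have "\<dots> = (\<integral>\<^sup>+x. f x * g x \<partial>M)"
  proof (rule nn_integral_cong)
    fix x
    show "ennreal (norm (indicator S x *\<^sub>R (complex_of_real (\<kappa> x) * u x))) = f x * g x"
    proof (cases "x \<in> S")
      case True
      have "\<kappa> x * h x * (\<kappa> x * (cmod (u x))\<^sup>2 / h x) = (\<kappa> x * cmod (u x))\<^sup>2"
        using pos[OF True] by (simp add: field_simps power2_eq_square)
      then have "sqrt (\<kappa> x * h x) * sqrt (\<kappa> x * (cmod (u x))\<^sup>2 / h x) = \<kappa> x * cmod (u x)"
        using pos[OF True] by (simp add: real_sqrt_mult[symmetric])
      with True pos show ?thesis
        by (simp add: f_def g_def norm_mult ennreal_mult[symmetric] less_imp_le)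
    qed (simp add: f_def g_def)
  qed
  finally have "(ennreal (cmod (set_lebesgue_integral M S (\<lambda>x. complex_of_real (\<kappa> x) * u x))))\<^sup>2
      \<le> (\<integral>\<^sup>+x. f x * g x \<partial>M)\<^sup>2"
    by (rule power_mono) simp
  also have "\<dots> \<le> (\<integral>\<^sup>+x. f x ^ 2 \<partial>M) * (\<integral>\<^sup>+x. g x ^ 2 \<partial>M)"
    by (rule Cauchy_Schwarz_nn_integral) measurable
  also have "(\<integral>\<^sup>+x. f x ^ 2 \<partial>M) = (\<integral>\<^sup>+x\<in>S. ennreal (\<kappa> x * h x) \<partial>M)"
    by (intro nn_integral_cong) (auto simp: f_def ennreal_power less_imp_le dest: pos split: split_indicator)
  also have "(\<integral>\<^sup>+x. g x ^ 2 \<partial>M) = (\<integral>\<^sup>+x\<in>S. ennreal (\<kappa> x * (cmod (u x))\<^sup>2 / h x) \<partial>M)"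
    by (intro nn_integral_cong) (auto simp: g_def ennreal_power less_imp_le dest: pos split: split_indicator)
  finally show ?thesis
    by (simp add: ennreal_power)
qed

lemma nn_integral_swap_indicator:
  fixes a g :: "real \<Rightarrow> ennreal" and I :: "real \<Rightarrow> real set"
  assumes [measurable]: "a \<in> borel_measurable borel" "g \<in> borel_measurable borel"
    "A \<in> sets borel" "\<And>r. I r \<in> sets borel"
    "Measurable.pred (lborel \<Otimes>\<^sub>M lborel) (\<lambda>(\<rho>, r). \<rho> \<in> I r)"
  shows "(\<integral>\<^sup>+r\<in>A. a r * (\<integral>\<^sup>+\<rho>\<in>I r. g \<rho> \<partial>lborel) \<partial>lborel)
    = (\<integral>\<^sup>+\<rho>. g \<rho> * (\<integral>\<^sup>+r\<in>A. a r * indicator (I r) \<rho> \<partial>lborel) \<partial>lborel)"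
proof -
  have "(\<integral>\<^sup>+r\<in>A. a r * (\<integral>\<^sup>+\<rho>\<in>I r. g \<rho> \<partial>lborel) \<partial>lborel)
      = (\<integral>\<^sup>+r. \<integral>\<^sup>+\<rho>. indicator A r * a r * g \<rho> * indicator (I r) \<rho> \<partial>lborel \<partial>lborel)"
    by (intro nn_integral_cong) (simp add: nn_integral_cmult[symmetric] ac_simps)
  also have "\<dots> = (\<integral>\<^sup>+\<rho>. \<integral>\<^sup>+r. indicator A r * a r * g \<rho> * indicator (I r) \<rho> \<partial>lborel \<partial>lborel)"
    by (rule lborel_pair.Fubini') measurable
  also have "\<dots> = (\<integral>\<^sup>+\<rho>. g \<rho> * (\<integral>\<^sup>+r\<in>A. a r * indicator (I r) \<rho> \<partial>lborel) \<partial>lborel)"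
    by (intro nn_integral_cong) (simp add: nn_integral_cmult[symmetric] ac_simps)
  finally show ?thesis .
qed

lemma Schur_test:
  fixes u :: "real \<Rightarrow> complex" and \<kappa> h v w H :: "real \<Rightarrow> real" and I :: "real \<Rightarrow> real set"
  assumes u: "set_borel_measurable lborel A u"
    and [measurable]: "\<kappa> \<in> borel_measurable borel"
    "h \<in> borel_measurable borel" "v \<in> borel_measurable borel" "w \<in> borel_measurable borel"
    "H \<in> borel_measurable borel" "A \<in> sets borel" "\<And>r. I r \<in> sets borel"
    "Measurable.pred (lborel \<Otimes>\<^sub>M lborel) (\<lambda>(\<rho>, r). \<rho> \<in> I r)"
    and I_sub: "\<And>r. r \<in> A \<Longrightarrow> I r \<subseteq> A"
    and pos: "\<And>\<rho>. \<rho> \<in> A \<Longrightarrow> 0 < \<kappa> \<rho> \<and> 0 < h \<rho>"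
    and nonneg: "\<And>r. r \<in> A \<Longrightarrow> 0 \<le> w r \<and> 0 \<le> H r"
    and "0 \<le> C"
    and row: "\<And>r. r \<in> A \<Longrightarrow> (\<integral>\<^sup>+\<rho>\<in>I r. ennreal (\<kappa> \<rho> * h \<rho>) \<partial>lborel) \<le> ennreal (H r)"
    and col: "\<And>\<rho>. \<rho> \<in> A \<Longrightarrow>
      (\<integral>\<^sup>+r\<in>A. ennreal (w r * H r) * indicator (I r) \<rho> \<partial>lborel) \<le> ennreal (C * v \<rho> * h \<rho> / \<kappa> \<rho>)"
  shows "(\<integral>\<^sup>+r. indicator A r * ennreal ((cmod (set_lebesgue_integral lborel (I r)
            (\<lambda>\<rho>. complex_of_real (\<kappa> \<rho>) * u \<rho>)))\<^sup>2 * w r) \<partial>lborel)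
    \<le> ennreal C * (\<integral>\<^sup>+\<rho>. indicator A \<rho> * ennreal (v \<rho> * (cmod (u \<rho>))\<^sup>2) \<partial>lborel)"
proof -
  have [measurable]: "(\<lambda>\<rho>. indicator A \<rho> *\<^sub>R u \<rho>) \<in> borel_measurable borel"
    using u by (simp add: set_borel_measurable_def)
  define g where "g \<rho> = ennreal (\<kappa> \<rho> * (cmod (indicator A \<rho> *\<^sub>R u \<rho>))\<^sup>2 / h \<rho>)" for \<rho>
  have [measurable]: "g \<in> borel_measurable borel"
    unfolding g_def by measurable
  have g_eq: "g \<rho> = ennreal (\<kappa> \<rho> * (cmod (u \<rho>))\<^sup>2 / h \<rho>)" if "\<rho> \<in> A" for \<rho>
    using that by (simp add: g_def)
  have row_bound: "ennreal ((cmod (set_lebesgue_integral lborel (I r)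
        (\<lambda>\<rho>. complex_of_real (\<kappa> \<rho>) * u \<rho>)))\<^sup>2 * w r)
      \<le> ennreal (w r * H r) * (\<integral>\<^sup>+\<rho>\<in>I r. g \<rho> \<partial>lborel)" if "r \<in> A" for r
  proof -
    have "(\<integral>\<^sup>+\<rho>\<in>I r. ennreal (\<kappa> \<rho> * (cmod (u \<rho>))\<^sup>2 / h \<rho>) \<partial>lborel) = (\<integral>\<^sup>+\<rho>\<in>I r. g \<rho> \<partial>lborel)"
      using I_sub[OF that] g_eq by (intro nn_integral_cong) (auto split: split_indicator)
    moreover have "ennreal ((cmod (set_lebesgue_integral lborel (I r)
        (\<lambda>\<rho>. complex_of_real (\<kappa> \<rho>) * u \<rho>)))\<^sup>2)
        \<le> (\<integral>\<^sup>+\<rho>\<in>I r. ennreal (\<kappa> \<rho> * h \<rho>) \<partial>lborel) *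
          (\<integral>\<^sup>+\<rho>\<in>I r. ennreal (\<kappa> \<rho> * (cmod (u \<rho>))\<^sup>2 / h \<rho>) \<partial>lborel)"
      using I_sub[OF that] pos
      by (intro norm_set_integral_weighted_Cauchy_Schwarz set_borel_measurable_subset[OF u]) auto
    ultimately have "ennreal ((cmod (set_lebesgue_integral lborel (I r)
        (\<lambda>\<rho>. complex_of_real (\<kappa> \<rho>) * u \<rho>)))\<^sup>2)
        \<le> ennreal (H r) * (\<integral>\<^sup>+\<rho>\<in>I r. g \<rho> \<partial>lborel)"
      using row[OF that] by (auto elim!: order_trans intro: mult_right_mono)
    then have "ennreal (w r) * ennreal ((cmod (set_lebesgue_integral lborel (I r)
        (\<lambda>\<rho>. complex_of_real (\<kappa> \<rho>) * u \<rho>)))\<^sup>2)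
        \<le> ennreal (w r) * (ennreal (H r) * (\<integral>\<^sup>+\<rho>\<in>I r. g \<rho> \<partial>lborel))"
      by (rule mult_left_mono) simp
    with nonneg[OF that] show ?thesis
      by (simp add: ennreal_mult' mult.commute[of _ "w r"] flip: mult.assoc)
  qed
  have col_bound: "g \<rho> * (\<integral>\<^sup>+r\<in>A. ennreal (w r * H r) * indicator (I r) \<rho> \<partial>lborel)
      \<le> ennreal C * (indicator A \<rho> * ennreal (v \<rho> * (cmod (u \<rho>))\<^sup>2))" for \<rho>
  proof (cases "\<rho> \<in> A")
    case True
    have "g \<rho> * (\<integral>\<^sup>+r\<in>A. ennreal (w r * H r) * indicator (I r) \<rho> \<partial>lborel)
        \<le> g \<rho> * ennreal (C * v \<rho> * h \<rho> / \<kappa> \<rho>)"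
      by (intro mult_left_mono col True) simp
    also have "\<dots> = ennreal (\<kappa> \<rho> * (cmod (u \<rho>))\<^sup>2 / h \<rho> * (C * v \<rho> * h \<rho> / \<kappa> \<rho>))"
      unfolding g_eq[OF True] using pos[OF True] by (intro ennreal_mult'[symmetric]) simp
    also have "\<kappa> \<rho> * (cmod (u \<rho>))\<^sup>2 / h \<rho> * (C * v \<rho> * h \<rho> / \<kappa> \<rho>) = C * (v \<rho> * (cmod (u \<rho>))\<^sup>2)"
      using pos[OF True] by (simp add: field_simps)
    also have "ennreal (C * (v \<rho> * (cmod (u \<rho>))\<^sup>2)) = ennreal C * ennreal (v \<rho> * (cmod (u \<rho>))\<^sup>2)"
      using \<open>0 \<le> C\<close> by (rule ennreal_mult')
    finally show ?thesis
      using True by simp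
  next
    case False
    then have "(\<lambda>r. ennreal (w r * H r) * indicator (I r) \<rho> * indicator A r) = (\<lambda>r. 0)"
      using I_sub by (auto simp: fun_eq_iff split: split_indicator)
    with False show ?thesis
      by simp
  qed
  have "(\<lambda>\<rho>. indicator A \<rho> * ennreal (v \<rho> * (cmod (u \<rho>))\<^sup>2))
      = (\<lambda>\<rho>. ennreal (v \<rho> * (cmod (indicator A \<rho> *\<^sub>R u \<rho>))\<^sup>2))"
    by (auto split: split_indicator)
  then have [measurable]: "(\<lambda>\<rho>. indicator A \<rho> * ennreal (v \<rho> * (cmod (u \<rho>))\<^sup>2)) \<in> borel_measurable borel"
    by (simp only:) measurable
  have "(\<integral>\<^sup>+r. indicator A r * ennreal ((cmod (set_lebesgue_integral lborel (I r)
            (\<lambda>\<rho>. complex_of_real (\<kappa> \<rho>) * u \<rho>)))\<^sup>2 * w r) \<partial>lborel)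
      \<le> (\<integral>\<^sup>+r\<in>A. ennreal (w r * H r) * (\<integral>\<^sup>+\<rho>\<in>I r. g \<rho> \<partial>lborel) \<partial>lborel)"
    by (intro nn_integral_mono) (auto intro: row_bound split: split_indicator)
  also have "\<dots> = (\<integral>\<^sup>+\<rho>. g \<rho> * (\<integral>\<^sup>+r\<in>A. ennreal (w r * H r) * indicator (I r) \<rho> \<partial>lborel) \<partial>lborel)"
    by (rule nn_integral_swap_indicator) measurable
  also have "\<dots> \<le> (\<integral>\<^sup>+\<rho>. ennreal C * (indicator A \<rho> * ennreal (v \<rho> * (cmod (u \<rho>))\<^sup>2)) \<partial>lborel)"
    by (intro nn_integral_mono col_bound)
  also have "\<dots> = ennreal C * (\<integral>\<^sup>+\<rho>. indicator A \<rho> * ennreal (v \<rho> * (cmod (u \<rho>))\<^sup>2) \<partial>lborel)"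
    by (rule nn_integral_cmult) measurable
  finally show ?thesis .
qed

lemma bessel_G_pos_scaled:
  "0 \<le> x \<Longrightarrow> x < 1 \<Longrightarrow> 0 < bessel_G k (bessel_zero k * x)"
  using bessel_zero_pos[of k] by (intro bessel_G_pos_below_bessel_zero) auto

lemma bessel_G_Suc_pos_scaled:
  "0 \<le> x \<Longrightarrow> x \<le> 1 \<Longrightarrow> 0 < bessel_G (Suc k) (bessel_zero k * x)"
  using bessel_zero_pos[of k] by (intro bessel_G_Suc_pos) (auto intro: mult_left_le)

lemma nn_integral_pow_bessel_G:
  assumes "0 \<le> r" "r \<le> 1"
  shows "(\<integral>\<^sup>+x\<in>{0..r}. ennreal (2 * x ^ (2 * k + 1) * bessel_G k (bessel_zero k * x)) \<partial>lborel)
    = ennreal (r ^ (2 * k + 2) * bessel_G (Suc k) (bessel_zero k * r))"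
proof -
  have "(\<integral>\<^sup>+x\<in>{0..r}. ennreal (2 * x ^ (2 * k + 1) * bessel_G k (bessel_zero k * x)) \<partial>lborel)
    = ennreal (r ^ (2 * k + 2) * bessel_G (Suc k) (bessel_zero k * r)
        - 0 ^ (2 * k + 2) * bessel_G (Suc k) (bessel_zero k * 0))"
  proof (rule nn_integral_FTC_Icc)
    fix x :: real
    assume "x \<in> {0..r}"
    with assms have "0 \<le> bessel_G k (bessel_zero k * x)"
      using bessel_G_pos_scaled[of x k] bessel_G_bessel_zero[of k] by (cases "x = 1") auto
    with \<open>x \<in> {0..r}\<close> show "0 \<le> 2 * x ^ (2 * k + 1) * bessel_G k (bessel_zero k * x)"
      by simp
  qed (use assms has_real_derivative_pow_bessel_G in auto)
  then show ?thesis
    by simp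
qed

lemma nn_integral_bessel_G_tail:
  assumes "0 \<le> r" "r \<le> 1"
  shows "(\<integral>\<^sup>+x\<in>{r..1}. ennreal (x * bessel_G (Suc k) (bessel_zero k * x)) \<partial>lborel)
    = ennreal (2 * bessel_G k (bessel_zero k * r) / (bessel_zero k)\<^sup>2)"
proof -
  define j where "j = bessel_zero k"
  have "0 < j"
    using bessel_zero_pos by (simp add: j_def)
  have "((\<lambda>x. - 2 * bessel_G k (j * x) / j\<^sup>2) has_real_derivative x * bessel_G (Suc k) (j * x)) (at x)"
    for x
    using \<open>0 < j\<close> by (auto intro!: derivative_eq_intros simp: power2_eq_square)
  moreover have "0 \<le> x * bessel_G (Suc k) (j * x)" if "x \<in> {r..1}" for x
    using that assms bessel_G_Suc_pos_scaled[of x k] by (simp add: j_def)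
  ultimately have "(\<integral>\<^sup>+x\<in>{r..1}. ennreal (x * bessel_G (Suc k) (j * x)) \<partial>lborel)
      = ennreal (- 2 * bessel_G k (j * 1) / j\<^sup>2 - - 2 * bessel_G k (j * r) / j\<^sup>2)"
    using assms by (intro nn_integral_FTC_Icc) auto
  then show ?thesis
    by (simp add: j_def bessel_G_bessel_zero)
qed

lemma Hardy_Bessel_inequality_nonpos:
  fixes d :: int and u :: "real \<Rightarrow> complex"
  assumes u: "set_borel_measurable lborel {0<..<1} u" and "d \<le> 0"
  shows "(\<integral>\<^sup>+ r. indicator {0<..<1} r *
           ennreal ((cmod (set_lebesgue_integral lborel {0<..r}
             (\<lambda>\<rho>. complex_of_real (\<rho> powr real_of_int (1 - d)) * u \<rho>)))\<^sup>2
             * r powr real_of_int (2 * d - 1)) \<partial>lborel)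
    \<le> ennreal (1 / (bessel_zero (nat (- d)))\<^sup>2) *
      (\<integral>\<^sup>+ \<rho>. indicator {0<..<1} \<rho> * ennreal (\<rho> * (cmod (u \<rho>))\<^sup>2) \<partial>lborel)"
proof -
  define m where "m = nat (- d)"
  define j where "j = bessel_zero m"
  have "0 < j"
    by (simp add: j_def bessel_zero_pos)
  have "1 - real_of_int d = real (Suc m)" "2 * real_of_int d - 1 = - real (2 * m + 1)"
    using \<open>d \<le> 0\<close> by (simp_all add: m_def)
  then have \<kappa>: "\<rho> powr (1 - real_of_int d) = \<rho> ^ Suc m"
    and w: "\<rho> powr (2 * real_of_int d - 1) = 1 / \<rho> ^ (2 * m + 1)" if "0 < \<rho>" for \<rho> :: real
    using that by (simp_all only: powr_minus_divide powr_realpow)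
  show ?thesis
    unfolding m_def[symmetric] j_def[symmetric]
  proof (rule Schur_test[OF u, where h = "\<lambda>\<rho>. 2 * \<rho> ^ m * bessel_G m (j * \<rho>)"
        and H = "\<lambda>r. r ^ (2 * m + 2) * bessel_G (Suc m) (j * r)"])
    show "Measurable.pred (lborel \<Otimes>\<^sub>M lborel) (\<lambda>(\<rho>::real, r). \<rho> \<in> {0<..r})"
      unfolding case_prod_beta greaterThanAtMost_iff by measurable
  next
    fix r :: real
    assume r: "r \<in> {0<..<1}"
    show "(\<integral>\<^sup>+\<rho>\<in>{0<..r}. ennreal (\<rho> powr real_of_int (1 - d) * (2 * \<rho> ^ m * bessel_G m (j * \<rho>))) \<partial>lborel)
        \<le> ennreal (r ^ (2 * m + 2) * bessel_G (Suc m) (j * r))"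
    proof -
      have "(\<integral>\<^sup>+\<rho>\<in>{0<..r}. ennreal (\<rho> powr real_of_int (1 - d) * (2 * \<rho> ^ m * bessel_G m (j * \<rho>))) \<partial>lborel)
          \<le> (\<integral>\<^sup>+\<rho>\<in>{0..r}. ennreal (2 * \<rho> ^ (2 * m + 1) * bessel_G m (j * \<rho>)) \<partial>lborel)"
        by (intro nn_integral_mono)
          (simp add: \<kappa> power_add mult_2[of m] mult_2_right[of m] mult_ac split: split_indicator)
      also have "\<dots> = ennreal (r ^ (2 * m + 2) * bessel_G (Suc m) (j * r))"
        using r by (intro nn_integral_pow_bessel_G[of r m, folded j_def]) auto
      finally show ?thesis .
    qed
  next
    fix \<rho> :: real
    assume \<rho>: "\<rho> \<in> {0<..<1}"
    show "(\<integral>\<^sup>+r\<in>{0<..<1}. ennreal (r powr real_of_int (2 * d - 1) * (r ^ (2 * m + 2) * bessel_G (Suc m) (j * r)))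
          * indicator {0<..r} \<rho> \<partial>lborel)
        \<le> ennreal (1 / j\<^sup>2 * \<rho> * (2 * \<rho> ^ m * bessel_G m (j * \<rho>)) / \<rho> powr real_of_int (1 - d))"
    proof -
      have "(\<integral>\<^sup>+r\<in>{0<..<1}. ennreal (r powr real_of_int (2 * d - 1) * (r ^ (2 * m + 2) * bessel_G (Suc m) (j * r)))
          * indicator {0<..r} \<rho> \<partial>lborel)
          \<le> (\<integral>\<^sup>+r\<in>{\<rho>..1}. ennreal (r * bessel_G (Suc m) (j * r)) \<partial>lborel)"
        by (intro nn_integral_mono) (simp add: w power_add split: split_indicator)
      also have "\<dots> = ennreal (2 * bessel_G m (j * \<rho>) / j\<^sup>2)"
        using \<rho> by (intro nn_integral_bessel_G_tail[of \<rho> m, folded j_def]) auto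
      also have "2 * bessel_G m (j * \<rho>) / j\<^sup>2
          = 1 / j\<^sup>2 * \<rho> * (2 * \<rho> ^ m * bessel_G m (j * \<rho>)) / \<rho> powr real_of_int (1 - d)"
        using \<rho> \<open>0 < j\<close> by (simp add: \<kappa> field_simps)
      finally show ?thesis .
    qed
  qed (auto simp: j_def bessel_G_pos_scaled bessel_G_Suc_pos_scaled less_imp_le zero_less_mult_iff)
qed

lemma Hardy_Bessel_inequality_pos:
  fixes d :: int and u :: "real \<Rightarrow> complex"
  assumes u: "set_borel_measurable lborel {0<..<1} u" and "1 \<le> d"
  shows "(\<integral>\<^sup>+ r. indicator {0<..<1} r *
           ennreal ((cmod (set_lebesgue_integral lborel {r..<1}
             (\<lambda>\<rho>. complex_of_real (\<rho> powr real_of_int (1 - d)) * u \<rho>)))\<^sup>2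
             * r powr real_of_int (2 * d - 1)) \<partial>lborel)
    \<le> ennreal (1 / (bessel_zero (nat (d - 1)))\<^sup>2) *
      (\<integral>\<^sup>+ \<rho>. indicator {0<..<1} \<rho> * ennreal (\<rho> * (cmod (u \<rho>))\<^sup>2) \<partial>lborel)"
proof -
  define k where "k = nat (d - 1)"
  define j where "j = bessel_zero k"
  have "0 < j"
    by (simp add: j_def bessel_zero_pos)
  have "1 - real_of_int d = - real k" "2 * real_of_int d - 1 = real (2 * k + 1)"
    using \<open>1 \<le> d\<close> by (simp_all add: k_def)
  then have \<kappa>: "\<rho> powr (1 - real_of_int d) = 1 / \<rho> ^ k"
    and w: "\<rho> powr (2 * real_of_int d - 1) = \<rho> ^ (2 * k + 1)" if "0 < \<rho>" for \<rho> :: real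
    using that by (simp_all only: powr_minus_divide powr_realpow)
  show ?thesis
    unfolding k_def[symmetric] j_def[symmetric]
  proof (rule Schur_test[OF u, where h = "\<lambda>\<rho>. \<rho> ^ Suc k * bessel_G (Suc k) (j * \<rho>)"
        and H = "\<lambda>r. 2 * bessel_G k (j * r) / j\<^sup>2"])
    show "Measurable.pred (lborel \<Otimes>\<^sub>M lborel) (\<lambda>(\<rho>::real, r). \<rho> \<in> {r..<1})"
      unfolding case_prod_beta atLeastLessThan_iff by measurable
  next
    fix r :: real
    assume r: "r \<in> {0<..<1}"
    show "(\<integral>\<^sup>+\<rho>\<in>{r..<1}. ennreal (\<rho> powr real_of_int (1 - d) * (\<rho> ^ Suc k * bessel_G (Suc k) (j * \<rho>))) \<partial>lborel)
        \<le> ennreal (2 * bessel_G k (j * r) / j\<^sup>2)"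
    proof -
      have "(\<integral>\<^sup>+\<rho>\<in>{r..<1}. ennreal (\<rho> powr real_of_int (1 - d) * (\<rho> ^ Suc k * bessel_G (Suc k) (j * \<rho>))) \<partial>lborel)
          \<le> (\<integral>\<^sup>+\<rho>\<in>{r..1}. ennreal (\<rho> * bessel_G (Suc k) (j * \<rho>)) \<partial>lborel)"
        using r by (intro nn_integral_mono) (simp add: \<kappa> split: split_indicator)
      also have "\<dots> = ennreal (2 * bessel_G k (j * r) / j\<^sup>2)"
        using r by (intro nn_integral_bessel_G_tail[of r k, folded j_def]) auto
      finally show ?thesis .
    qed
  next
    fix \<rho> :: real
    assume \<rho>: "\<rho> \<in> {0<..<1}"
    show "(\<integral>\<^sup>+r\<in>{0<..<1}. ennreal (r powr real_of_int (2 * d - 1) * (2 * bessel_G k (j * r) / j\<^sup>2))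
          * indicator {r..<1} \<rho> \<partial>lborel)
        \<le> ennreal (1 / j\<^sup>2 * \<rho> * (\<rho> ^ Suc k * bessel_G (Suc k) (j * \<rho>)) / \<rho> powr real_of_int (1 - d))"
    proof -
      have "(\<integral>\<^sup>+r\<in>{0<..<1}. ennreal (r powr real_of_int (2 * d - 1) * (2 * bessel_G k (j * r) / j\<^sup>2))
            * indicator {r..<1} \<rho> \<partial>lborel)
          \<le> (\<integral>\<^sup>+r\<in>{0..\<rho>}. ennreal (1 / j\<^sup>2) * ennreal (2 * r ^ (2 * k + 1) * bessel_G k (j * r)) \<partial>lborel)"
        by (intro nn_integral_mono)
          (simp add: w ennreal_mult'[symmetric] split: split_indicator, simp add: mult_ac)
      also have "\<dots> = ennreal (1 / j\<^sup>2) *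
          (\<integral>\<^sup>+r\<in>{0..\<rho>}. ennreal (2 * r ^ (2 * k + 1) * bessel_G k (j * r)) \<partial>lborel)"
        unfolding mult.assoc by (rule nn_integral_cmult) measurable
      also have "\<dots> = ennreal (1 / j\<^sup>2) * ennreal (\<rho> ^ (2 * k + 2) * bessel_G (Suc k) (j * \<rho>))"
        using \<rho> nn_integral_pow_bessel_G[of \<rho> k, folded j_def] by simp
      also have "\<dots> = ennreal (1 / j\<^sup>2 * \<rho> * (\<rho> ^ Suc k * bessel_G (Suc k) (j * \<rho>)) / \<rho> powr real_of_int (1 - d))"
        using \<rho> by (simp add: \<kappa> ennreal_mult'[symmetric] power_add mult_2[of k] mult_2_right[of k] mult_ac)
      finally show ?thesis .
    qed
  qed (auto simp: j_def bessel_G_pos_scaled bessel_G_Suc_pos_scaled less_imp_le)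
qed

theorem lemma2p5:
  fixes d :: int and u :: "real \<Rightarrow> complex"
  assumes meas: "set_borel_measurable lborel {0<..<1} u"
    and fin: "(\<integral>\<^sup>+ \<rho>. indicator {0<..<1} \<rho> * ennreal (\<rho> * (cmod (u \<rho>))\<^sup>2) \<partial>lborel) < \<infinity>"
  shows "(d \<le> 0 \<longrightarrow>
           (\<integral>\<^sup>+ r. indicator {0<..<1} r *
              ennreal ((cmod (set_lebesgue_integral lborel {0<..r}
                   (\<lambda>\<rho>. complex_of_real (\<rho> powr real_of_int (1 - d)) * u \<rho>)))\<^sup>2
                 * r powr real_of_int (2 * d - 1)) \<partial>lborel)
           \<le> ennreal (1 / (bessel_zero (nat (- d)))\<^sup>2) *
             (\<integral>\<^sup>+ \<rho>. indicator {0<..<1} \<rho> * ennreal (\<rho> * (cmod (u \<rho>))\<^sup>2) \<partial>lborel))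
       \<and> (d \<ge> 1 \<longrightarrow>
           (\<integral>\<^sup>+ r. indicator {0<..<1} r *
              ennreal ((cmod (set_lebesgue_integral lborel {r..<1}
                   (\<lambda>\<rho>. complex_of_real (\<rho> powr real_of_int (1 - d)) * u \<rho>)))\<^sup>2
                 * r powr real_of_int (2 * d - 1)) \<partial>lborel)
           \<le> ennreal (1 / (bessel_zero (nat (d - 1)))\<^sup>2) *
             (\<integral>\<^sup>+ \<rho>. indicator {0<..<1} \<rho> * ennreal (\<rho> * (cmod (u \<rho>))\<^sup>2) \<partial>lborel))"
  using Hardy_Bessel_inequality_nonpos[OF meas] Hardy_Bessel_inequality_pos[OF meas] by blast

end
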